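(* Let $S$ be a $\mathcal{C}$-semigroup with $S\neq \mathcal{C}$ and genus $g$. Then $S$ is symmetric if and only if $g=\# I_S(F(S))$.
   Context: An integer cone $\mathcal{C}\subseteq\mathbb{N}^p$ is the set of integer points of a finitely generated rational cone in $\mathbb{Q}_{\ge0}^p$. A $\mathcal{C}$-semigroup is a subset $S\subseteq\mathcal{C}$ containing $0$, closed under addition, with $\mathcal{C}\setminus S$ finite; $\mathcal{H}(S)=\mathcal{C}\setminus S$ and $g=\#\mathcal{H}(S)$. A monomial order $\preceq$ on $\mathbb{N}^p$ is fixed (total order, compatible with addition, $\mathbf 0\preceq\mathbf c$ for all $\mathbf c$), and $F(S)=\max_\preceq\mathcal{H}(S)$. $\mathrm{PF}(S)=\{\mathbf x\in\mathcal{H}(S)\mid \mathbf x+(S\setminus\{0\})\subseteq S\}$. $S$ is symmetric if $\mathrm{PF}(S)=\{F(S)\}$. For $L\subseteq\mathbb{N}^p$, $\mathbf x\le_L\mathbf y$ means $\mathbf y-\mathbf x\in L$. For $\mathbf n\in\mathcal{C}$, $I_S(\mathbf n)=\{\mathbf s\in S\mid \mathbf s\le_{\mathcal{C}}\mathbf n\}$. *)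

theory Defs
  imports Complex_Main "HOL-Library.Function_Algebras"
begin

text \<open>Points of N^p are modelled as functions 'n \<Rightarrow> nat, for a finite index type 'n
  (so p = CARD('n)). Addition and zero are pointwise (Function_Algebras).\<close>

definition integer_cone :: "('n::finite \<Rightarrow> nat) set \<Rightarrow> bool" where
  "integer_cone C \<longleftrightarrow>
     (\<exists>G :: ('n \<Rightarrow> rat) set. finite G \<and> (\<forall>g\<in>G. \<forall>i. g i \<ge> 0) \<and>
        C = {x. \<exists>c :: ('n \<Rightarrow> rat) \<Rightarrow> rat. (\<forall>g\<in>G. c g \<ge> 0) \<and>
                   (\<forall>i. of_nat (x i) = (\<Sum>g\<in>G. c g * g i))})"

definition monomial_order :: "(('n \<Rightarrow> nat) \<Rightarrow> ('n \<Rightarrow> nat) \<Rightarrow> bool) \<Rightarrow> bool" where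
  "monomial_order le \<longleftrightarrow>
     (\<forall>x. le x x) \<and>
     (\<forall>x y. le x y \<and> le y x \<longrightarrow> x = y) \<and>
     (\<forall>x y z. le x y \<and> le y z \<longrightarrow> le x z) \<and>
     (\<forall>x y. le x y \<or> le y x) \<and>
     (\<forall>x y z. le x y \<longrightarrow> le (x + z) (y + z)) \<and>
     (\<forall>c. le 0 c)"

definition C_semigroup :: "('n \<Rightarrow> nat) set \<Rightarrow> ('n \<Rightarrow> nat) set \<Rightarrow> bool" where
  "C_semigroup C S \<longleftrightarrow> S \<subseteq> C \<and> 0 \<in> S \<and> (\<forall>x\<in>S. \<forall>y\<in>S. x + y \<in> S) \<and> finite (C - S)"

definition gaps :: "('n \<Rightarrow> nat) set \<Rightarrow> ('n \<Rightarrow> nat) set \<Rightarrow> ('n \<Rightarrow> nat) set" where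
  "gaps C S = C - S"

definition genus :: "('n \<Rightarrow> nat) set \<Rightarrow> ('n \<Rightarrow> nat) set \<Rightarrow> nat" where
  "genus C S = card (gaps C S)"

definition Frob :: "(('n \<Rightarrow> nat) \<Rightarrow> ('n \<Rightarrow> nat) \<Rightarrow> bool) \<Rightarrow> ('n \<Rightarrow> nat) set \<Rightarrow> ('n \<Rightarrow> nat) set \<Rightarrow> 'n \<Rightarrow> nat" where
  "Frob le C S = (THE f. f \<in> gaps C S \<and> (\<forall>y\<in>gaps C S. le y f))"

definition PF :: "('n \<Rightarrow> nat) set \<Rightarrow> ('n \<Rightarrow> nat) set \<Rightarrow> ('n \<Rightarrow> nat) set" where
  "PF C S = {x \<in> gaps C S. \<forall>s \<in> S - {0}. x + s \<in> S}"

definition symmetric_sg :: "(('n \<Rightarrow> nat) \<Rightarrow> ('n \<Rightarrow> nat) \<Rightarrow> bool) \<Rightarrow> ('n \<Rightarrow> nat) set \<Rightarrow> ('n \<Rightarrow> nat) set \<Rightarrow> bool" where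
  "symmetric_sg le C S \<longleftrightarrow> PF C S = {Frob le C S}"

text \<open>x \<le>_L y iff y - x \<in> L (difference taken in Z^p; since L \<subseteq> N^p this means y = x + l with l \<in> L).\<close>
definition le_L :: "('n \<Rightarrow> nat) set \<Rightarrow> ('n \<Rightarrow> nat) \<Rightarrow> ('n \<Rightarrow> nat) \<Rightarrow> bool" where
  "le_L L x y \<longleftrightarrow> (\<exists>l\<in>L. y = x + l)"

definition I_S :: "('n \<Rightarrow> nat) set \<Rightarrow> ('n \<Rightarrow> nat) set \<Rightarrow> ('n \<Rightarrow> nat) \<Rightarrow> ('n \<Rightarrow> nat) set" where
  "I_S C S n = {s \<in> S. le_L C s n}"

end

theory Submission
  imports Defs
begin

text \<open>Let F be the Frobenius element. The map s \<mapsto> F - s is a bijection from I_S(F) onto the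
  gaps h with F - h \<in> S (F - s \<in> S would force F \<in> S), so g = #I_S(F) holds exactly when
  F - h \<in> S for every gap h. This in turn characterises symmetry: starting from a gap h, a
  maximal gap of the form h + s with s \<in> S is pseudo-Frobenius, because moving further up by a
  nonzero element of S strictly increases it in the monomial order; and conversely F - h \<in> S
  rules out every pseudo-Frobenius h \<noteq> F, since then F = h + (F - h) \<in> S.\<close>

lemma integer_cone_add_closed:
  assumes "integer_cone C" "x \<in> C" "y \<in> C"
  shows "x + y \<in> C"
proof -
  obtain G :: "('a \<Rightarrow> rat) set" where
    C: "C = {x. \<exists>c :: ('a \<Rightarrow> rat) \<Rightarrow> rat. (\<forall>g\<in>G. c g \<ge> 0) \<and>
                   (\<forall>i. of_nat (x i) = (\<Sum>g\<in>G. c g * g i))}"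
    using assms(1) unfolding integer_cone_def by blast
  obtain c1 where c1: "\<forall>g\<in>G. c1 g \<ge> 0" "\<forall>i. of_nat (x i) = (\<Sum>g\<in>G. c1 g * g i)"
    using assms(2) C by blast
  obtain c2 where c2: "\<forall>g\<in>G. c2 g \<ge> 0" "\<forall>i. of_nat (y i) = (\<Sum>g\<in>G. c2 g * g i)"
    using assms(3) C by blast
  have "\<forall>g\<in>G. c1 g + c2 g \<ge> 0" using c1 c2 by auto
  moreover have "\<forall>i. of_nat ((x + y) i) = (\<Sum>g\<in>G. (c1 g + c2 g) * g i)"
    using c1 c2 by (simp add: distrib_right sum.distrib)
  ultimately show ?thesis unfolding C mem_Collect_eq
    by (intro exI[of _ "\<lambda>g. c1 g + c2 g"]) blast
qed

lemma monomial_order_antisym: "monomial_order le \<Longrightarrow> le x y \<Longrightarrow> le y x \<Longrightarrow> x = y"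
  unfolding monomial_order_def by blast

lemma monomial_order_le_add:
  assumes "monomial_order le"
  shows "le x (x + s)"
proof -
  have "le 0 s" "\<forall>x y z. le x y \<longrightarrow> le (x + z) (y + z)"
    using assms unfolding monomial_order_def by blast+
  then have "le (0 + x) (s + x)" by blast
  then show ?thesis by (simp add: add.commute)
qed

lemma monomial_order_add_le_imp_zero:
  assumes "monomial_order le" "le (x + s) x"
  shows "s = 0"
proof -
  have "x + s = x"
    using assms monomial_order_le_add monomial_order_antisym by metis
  then show ?thesis by simp
qed

lemma monomial_order_finite_has_max:
  assumes "monomial_order le" "finite A" "A \<noteq> {}"
  obtains m where "m \<in> A" "\<forall>y\<in>A. le y m"
proof -
  have refl: "\<forall>x. le x x" and trans: "\<forall>x y z. le x y \<and> le y z \<longrightarrow> le x z"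
    and total: "\<forall>x y. le x y \<or> le y x"
    using assms(1) unfolding monomial_order_def by blast+
  have "\<exists>m\<in>A. \<forall>y\<in>A. le y m"
    using assms(2,3)
  proof (induction A rule: finite_ne_induct)
    case (singleton x)
    then show ?case using refl by blast
  next
    case (insert x F)
    then obtain m where "m \<in> F" "\<forall>y\<in>F. le y m" by blast
    then show ?case using refl trans total by (metis insert_iff)
  qed
  then show ?thesis using that by blast
qed

lemma finite_gaps: "C_semigroup C S \<Longrightarrow> finite (gaps C S)"
  unfolding C_semigroup_def gaps_def by simp

lemma Frob_greatest_gap:
  assumes "monomial_order le" "C_semigroup C S" "S \<noteq> C"
  shows "Frob le C S \<in> gaps C S" "\<forall>y\<in>gaps C S. le y (Frob le C S)"
proof -
  have "gaps C S \<noteq> {}"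
    using assms(2,3) unfolding C_semigroup_def gaps_def by auto
  then obtain m where m: "m \<in> gaps C S" "\<forall>y\<in>gaps C S. le y m"
    using monomial_order_finite_has_max[OF assms(1) finite_gaps[OF assms(2)]] by blast
  have "\<exists>!f. f \<in> gaps C S \<and> (\<forall>y\<in>gaps C S. le y f)"
  proof (rule ex1I[of _ m])
    fix f assume "f \<in> gaps C S \<and> (\<forall>y\<in>gaps C S. le y f)"
    then show "f = m" using m monomial_order_antisym[OF assms(1)] by blast
  qed (use m in blast)
  from theI'[OF this] show "Frob le C S \<in> gaps C S" "\<forall>y\<in>gaps C S. le y (Frob le C S)"
    unfolding Frob_def by auto
qed

lemma gap_in_PF_if_no_gap_translate_above:
  assumes "integer_cone C" "monomial_order le" "C_semigroup C S"
    and "x \<in> gaps C S"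
    and "\<And>t. t \<in> S - {0} \<Longrightarrow> x + t \<in> gaps C S \<Longrightarrow> le (x + t) x"
  shows "x \<in> PF C S"
  unfolding PF_def
proof (intro CollectI conjI ballI assms(4))
  fix t assume t: "t \<in> S - {0}"
  have "x + t \<in> C"
    using integer_cone_add_closed[OF assms(1)] assms(3,4) t
    unfolding C_semigroup_def gaps_def by blast
  show "x + t \<in> S"
  proof (rule ccontr)
    assume "x + t \<notin> S"
    with \<open>x + t \<in> C\<close> have "le (x + t) x" using assms(5) t unfolding gaps_def by blast
    with t show False using monomial_order_add_le_imp_zero[OF assms(2)] by blast
  qed
qed

lemma Frob_in_PF:
  assumes "integer_cone C" "monomial_order le" "C_semigroup C S" "S \<noteq> C"
  shows "Frob le C S \<in> PF C S"
  using gap_in_PF_if_no_gap_translate_above[OF assms(1-3)] Frob_greatest_gap[OF assms(2-4)]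
  by blast

lemma gap_le_L_some_PF:
  fixes C S :: "('n::finite \<Rightarrow> nat) set" and le :: "('n \<Rightarrow> nat) \<Rightarrow> ('n \<Rightarrow> nat) \<Rightarrow> bool"
  assumes "integer_cone C" "monomial_order le" "C_semigroup C S" "h \<in> gaps C S"
  obtains f where "f \<in> PF C S" "le_L S h f"
proof -
  define A where "A = {x \<in> gaps C S. le_L S h x}"
  have "h \<in> A"
    using assms(3,4) unfolding A_def le_L_def C_semigroup_def
    by (metis (mono_tags) add_0_right mem_Collect_eq)
  moreover have "finite A"
    unfolding A_def using finite_gaps[OF assms(3)] by simp
  ultimately obtain f where f: "f \<in> A" "\<forall>y\<in>A. le y f"
    using monomial_order_finite_has_max[OF assms(2)] by blast
  have "x + t \<in> A" if "x \<in> A" "t \<in> S" "x + t \<in> gaps C S" for x t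
  proof -
    obtain s where "s \<in> S" "x = h + s" using \<open>x \<in> A\<close> unfolding A_def le_L_def by blast
    then have "s + t \<in> S" "x + t = h + (s + t)"
      using \<open>t \<in> S\<close> assms(3) unfolding C_semigroup_def by (auto simp: add.assoc)
    then show ?thesis using that(3) unfolding A_def le_L_def by blast
  qed
  then have "f \<in> PF C S"
    using f gap_in_PF_if_no_gap_translate_above[OF assms(1-3)] unfolding A_def by blast
  with f show ?thesis using that unfolding A_def by blast
qed

lemma symmetric_sg_iff_gaps_le_L_Frob:
  assumes "integer_cone C" "monomial_order le" "C_semigroup C S" "S \<noteq> C"
  shows "symmetric_sg le C S \<longleftrightarrow> (\<forall>h\<in>gaps C S. le_L S h (Frob le C S))"
proof
  assume "symmetric_sg le C S"
  then show "\<forall>h\<in>gaps C S. le_L S h (Frob le C S)"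
    using gap_le_L_some_PF[OF assms(1-3)] unfolding symmetric_sg_def by (metis singletonD)
next
  assume below: "\<forall>h\<in>gaps C S. le_L S h (Frob le C S)"
  have "x = Frob le C S" if x: "x \<in> PF C S" for x
  proof -
    obtain s where s: "s \<in> S" "Frob le C S = x + s"
      using below x unfolding PF_def le_L_def by blast
    have "s = 0"
      using x s Frob_greatest_gap(1)[OF assms(2-4)] unfolding PF_def gaps_def by auto
    with s show ?thesis by simp
  qed
  then show "symmetric_sg le C S"
    using Frob_in_PF[OF assms] unfolding symmetric_sg_def by blast
qed

lemma bij_betw_I_S_gaps_le_L:
  assumes "C_semigroup C S" "f \<in> gaps C S"
  shows "bij_betw (\<lambda>s. f - s) (I_S C S f) {h \<in> gaps C S. le_L S h f}"
proof (rule bij_betw_byWitness[where f' = "\<lambda>h. f - h"])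
  have f_notin: "f \<notin> S" using assms(2) unfolding gaps_def by blast
  show "\<forall>s\<in>I_S C S f. f - (f - s) = s"
    unfolding I_S_def le_L_def by (auto simp: add.commute)
  show "\<forall>h\<in>{h \<in> gaps C S. le_L S h f}. f - (f - h) = h"
    unfolding le_L_def by (auto simp: add.commute)
  show "(\<lambda>s. f - s) ` I_S C S f \<subseteq> {h \<in> gaps C S. le_L S h f}"
  proof (rule image_subsetI)
    fix s assume "s \<in> I_S C S f"
    then obtain l where s: "s \<in> S" "l \<in> C" "f = s + l" unfolding I_S_def le_L_def by blast
    have "l \<notin> S" using s f_notin assms(1) unfolding C_semigroup_def by blast
    with s show "f - s \<in> {h \<in> gaps C S. le_L S h f}"
      unfolding gaps_def le_L_def by (auto simp: add.commute)
  qed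
  show "(\<lambda>h. f - h) ` {h \<in> gaps C S. le_L S h f} \<subseteq> I_S C S f"
  proof (rule image_subsetI)
    fix h assume "h \<in> {h \<in> gaps C S. le_L S h f}"
    then obtain s where "h \<in> C" "s \<in> S" "f = s + h"
      unfolding gaps_def le_L_def by (auto simp: add.commute)
    then show "f - h \<in> I_S C S f" unfolding I_S_def le_L_def by auto
  qed
qed

theorem mainTheorem2:
  fixes C S :: "('n::finite \<Rightarrow> nat) set"
    and le :: "('n \<Rightarrow> nat) \<Rightarrow> ('n \<Rightarrow> nat) \<Rightarrow> bool"
  assumes "integer_cone C"
    and "monomial_order le"
    and "C_semigroup C S"
    and "S \<noteq> C"
  shows "symmetric_sg le C S \<longleftrightarrow> genus C S = card (I_S C S (Frob le C S))"
proof -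
  let ?F = "Frob le C S"
  let ?B = "{h \<in> gaps C S. le_L S h ?F}"
  have "card (I_S C S ?F) = card ?B"
    using bij_betw_I_S_gaps_le_L[OF assms(3) Frob_greatest_gap(1)[OF assms(2-4)]]
    by (rule bij_betw_same_card)
  then have "genus C S = card (I_S C S ?F) \<longleftrightarrow> ?B = gaps C S"
    unfolding genus_def using finite_gaps[OF assms(3)]
    by (metis (no_types, lifting) card_subset_eq mem_Collect_eq subsetI)
  also have "\<dots> \<longleftrightarrow> symmetric_sg le C S"
    using symmetric_sg_iff_gaps_le_L_Frob[OF assms] by blast
  finally show ?thesis by simp
qed

end
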